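(* For $z\in\{z\in\mathbb{C}:|\arg(z)|<\pi\}$, \[ {}_2F_2\left(\begin{matrix}1,&1\\3,&z+2\end{matrix};z\right)=\frac{2(z+1)}{z^2}\left(1+z-\frac{\gamma(z,z)}{z^{z-1}e^{-z}}\right). \] In particular, for every positive integer $n$, \[ {}_2F_2\left(\begin{matrix}1,&1\\3,&n+2\end{matrix};n\right)=\frac{2(n+1)}{n^2}\left(1+n-\frac{(n-1)!}{n^{n-1}}\left(e^n-\sum_{k=0}^{n-1}\frac{n^k}{k!}\right)\right). \]
   Context: ${}_pF_q$ denotes the generalized hypergeometric series $\sum_{k\ge0}\frac{(a_1)_k\cdots(a_p)_k}{(b_1)_k\cdots(b_q)_k}\frac{x^k}{k!}$, with $(a)_k$ the Pochhammer symbol. $\gamma(s,x)=\int_0^x t^{s-1}e^{-t}\,dt$ is the lower incomplete gamma function; $z^{z-1}$ uses the principal branch. *)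

theory Defs
  imports "HOL-Complex_Analysis.Complex_Analysis"
begin

definition hypergeom :: "'a::real_normed_field list \<Rightarrow> 'a list \<Rightarrow> 'a \<Rightarrow> 'a" where
  "hypergeom as bs x =
     (\<Sum>k. (\<Prod>a\<leftarrow>as. pochhammer a k) / (\<Prod>b\<leftarrow>bs. pochhammer b k) * x ^ k / fact k)"

text \<open>Lower incomplete gamma function: for Re s > 0 the integral of t powr (s-1) * exp(-t)
  along the segment from 0 to x (principal branch); for Re s \<le> 0 the standard analytic
  continuation in s via the recurrence gamma(s,x) = (gamma(s+1,x) + x^s e^(-x)) / s.\<close>
fun lower_gamma_aux :: "nat \<Rightarrow> complex \<Rightarrow> complex \<Rightarrow> complex" where
  "lower_gamma_aux 0 s x = contour_integral (linepath 0 x) (\<lambda>t. t powr (s - 1) * exp (- t))"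
| "lower_gamma_aux (Suc n) s x = (lower_gamma_aux n (s + 1) x + x powr s * exp (- x)) / s"

definition lower_gamma :: "complex \<Rightarrow> complex \<Rightarrow> complex" where
  "lower_gamma s x =
     (if Re s > 0 then lower_gamma_aux 0 s x
      else lower_gamma_aux (nat (\<lfloor>- Re s\<rfloor> + 1)) s x)"

end

theory Submission
  imports Defs
begin

text \<open>Write \<open>P(s, w) = \<Sum>\<^sub>k w^k / (s)\<^sub>k\<^sub>+\<^sub>1\<close>. For \<open>Re s > 0\<close> the function
  \<open>w^s e^(-w) P(s, w)\<close> is a primitive of \<open>w^(s-1) e^(-w)\<close> vanishing at \<open>0\<close>, because \<open>P\<close>
  solves \<open>s P + w P' = 1 + w P\<close>; hence \<open>\<gamma>(s, x) = x^s e^(-x) P(s, x)\<close>. The recurrence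
  \<open>s P(s, x) = 1 + x P(s + 1, x)\<close> is the one by which \<open>\<gamma>\<close> is continued to \<open>Re s \<le> 0\<close>, so this
  holds for all \<open>s\<close>. On the other side, the terms \<open>2 z^k / ((k + 1) (k + 2) (z + 2)\<^sub>k)\<close> of the
  hypergeometric series telescope, leaving \<open>2 - 2 P(z + 2, z)\<close>, and two steps of the recurrence
  express this through \<open>z P(z, z) = \<gamma>(z, z) / (z^(z-1) e^(-z))\<close>. For a positive integer \<open>n\<close>,
  \<open>x^n P(n, x) / (n - 1)!\<close> is the tail \<open>\<Sum>\<^sub>k\<^sub>\<ge>\<^sub>n x^k / k!\<close> of the exponential series.\<close>

lemma summable_of_ratio_over_linear:
  fixes f :: "nat \<Rightarrow> 'a::{real_normed_field,banach}"
  assumes ratio: "\<And>n. f (Suc n) = f n * (w / (c + of_nat n))"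
  shows "summable f"
proof -
  obtain N :: nat where N: "real N \<ge> 2 * norm w + norm c + 1"
    using real_arch_simple by blast
  show ?thesis
  proof (rule summable_ratio_test[where c = "1/2" and N = N])
    fix n assume "N \<le> n"
    have "norm (c + of_nat n) \<ge> real n - norm c"
      using norm_triangle_ineq2[of "of_nat n" "-c"] by (simp add: add.commute)
    with \<open>N \<le> n\<close> N have "norm (c + of_nat n) \<ge> 2 * norm w + 1"
      by linarith
    then have "norm (w / (c + of_nat n)) \<le> 1/2"
      by (simp add: norm_divide divide_le_eq)
    then have "norm (f n) * norm (w / (c + of_nat n)) \<le> norm (f n) * (1/2)"
      by (rule mult_left_mono) simp
    then show "norm (f (Suc n)) \<le> 1/2 * norm (f n)"
      by (simp only: ratio norm_mult mult.commute)
  qed simp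
qed

definition lower_gamma_coeff :: "'a::field_char_0 \<Rightarrow> nat \<Rightarrow> 'a" where
  "lower_gamma_coeff s k = 1 / pochhammer s (Suc k)"

definition lower_gamma_series :: "'a::{real_normed_field,banach} \<Rightarrow> 'a \<Rightarrow> 'a" where
  "lower_gamma_series s w = (\<Sum>k. lower_gamma_coeff s k * w ^ k)"

lemma summable_lower_gamma_series:
  fixes s w :: "'a::{real_normed_field,banach}"
  shows "summable (\<lambda>k. lower_gamma_coeff s k * w ^ k)"
proof (rule summable_of_ratio_over_linear[where w = w and c = "s + 1"])
  fix m
  show "lower_gamma_coeff s (Suc m) * w ^ Suc m = lower_gamma_coeff s m * w ^ m * (w / (s + 1 + of_nat m))"
    by (simp add: lower_gamma_coeff_def pochhammer_Suc[of s "Suc m"] add_ac times_divide_times_eq mult_ac)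
qed

lemma lower_gamma_series_sums:
  fixes s w :: "'a::{real_normed_field,banach}"
  shows "(\<lambda>k. lower_gamma_coeff s k * w ^ k) sums lower_gamma_series s w"
  unfolding lower_gamma_series_def using summable_lower_gamma_series by (rule summable_sums)

lemma lower_gamma_series_shift_sums:
  fixes s w :: "'a::{real_normed_field,banach}"
  shows "(\<lambda>k. w ^ Suc k / pochhammer s (Suc k)) sums (w * lower_gamma_series s w)"
  using sums_mult[OF lower_gamma_series_sums, of w s w]
  by (simp add: lower_gamma_coeff_def mult_ac)

lemma lower_gamma_series_rec:
  fixes s x :: "'a::{real_normed_field,banach}"
  assumes "s \<noteq> 0"
  shows "s * lower_gamma_series s x = 1 + x * lower_gamma_series (s + 1) x"
proof -
  have "(\<lambda>k. x ^ k / pochhammer (s + 1) k) sums (x * lower_gamma_series (s + 1) x + 1)"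
    using lower_gamma_series_shift_sums[of x "s + 1"] by (subst (asm) sums_Suc_iff) simp
  moreover have "x ^ k / pochhammer (s + 1) k = s * (lower_gamma_coeff s k * x ^ k)" for k
    using assms by (simp add: lower_gamma_coeff_def pochhammer_rec)
  ultimately have "(\<lambda>k. s * (lower_gamma_coeff s k * x ^ k)) sums (x * lower_gamma_series (s + 1) x + 1)"
    by simp
  then show ?thesis
    using sums_mult[OF lower_gamma_series_sums, of s s x] sums_unique2 by (simp add: add.commute)
qed

lemma lower_gamma_series_ode:
  fixes s w :: "'a::{real_normed_field,banach}"
  assumes s: "s \<notin> \<int>\<^sub>\<le>\<^sub>0"
  shows "s * lower_gamma_series s w + w * (\<Sum>k. diffs (lower_gamma_coeff s) k * w ^ k)
           = 1 + w * lower_gamma_series s w"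
proof -
  define P' where "P' = (\<Sum>k. diffs (lower_gamma_coeff s) k * w ^ k)"
  have "(\<lambda>k. diffs (lower_gamma_coeff s) k * w ^ k) sums P'"
    unfolding P'_def by (intro summable_sums termdiff_converges_all summable_lower_gamma_series)
  from sums_mult[OF this, of w]
  have "(\<lambda>k. of_nat k * lower_gamma_coeff s k * w ^ k) sums (w * P')"
    using sums_Suc_iff[of "\<lambda>k. of_nat k * lower_gamma_coeff s k * w ^ k" "w * P'"]
    by (simp add: diffs_def mult_ac)
  from sums_add[OF sums_mult[OF lower_gamma_series_sums, of s] this]
  have "(\<lambda>k. s * (lower_gamma_coeff s k * w ^ k) + of_nat k * lower_gamma_coeff s k * w ^ k)
          sums (s * lower_gamma_series s w + w * P')" .
  moreover have "s * (lower_gamma_coeff s k * w ^ k) + of_nat k * lower_gamma_coeff s k * w ^ k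
                   = w ^ k / pochhammer s k" for k
  proof -
    have "pochhammer s k \<noteq> 0" "s + of_nat k \<noteq> 0"
      using s pochhammer_eq_0_imp_nonpos_Int plus_of_nat_eq_0_imp by blast+
    then have "(s + of_nat k) * lower_gamma_coeff s k * w ^ k = w ^ k / pochhammer s k"
      by (simp add: lower_gamma_coeff_def pochhammer_Suc)
    then show ?thesis
      by (simp add: algebra_simps)
  qed
  moreover have "(\<lambda>k. w ^ k / pochhammer s k) sums (1 + w * lower_gamma_series s w)"
    using lower_gamma_series_shift_sums[of w s] by (subst (asm) sums_Suc_iff) (simp add: add.commute)
  ultimately show ?thesis
    unfolding P'_def[symmetric] using sums_unique2 by simp
qed

lemma has_field_derivative_lower_gamma_series:
  fixes s w :: "'a::{real_normed_field,banach}"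
  shows "(lower_gamma_series s has_field_derivative (\<Sum>k. diffs (lower_gamma_coeff s) k * w ^ k)) (at w)"
  unfolding lower_gamma_series_def[abs_def]
  by (intro termdiffs_strong_converges_everywhere summable_lower_gamma_series)

lemma continuous_on_lower_gamma_series [continuous_intros]:
  fixes s :: "'a::{real_normed_field,banach}"
  shows "continuous_on A f \<Longrightarrow> continuous_on A (\<lambda>x. lower_gamma_series s (f x))"
  by (rule continuous_on_compose2[of UNIV])
     (auto intro!: continuous_at_imp_continuous_on DERIV_isCont has_field_derivative_lower_gamma_series)

lemma powr_eq_mult_powr_diff_one:
  fixes w s :: complex
  assumes "w \<noteq> 0"
  shows "w powr s = w * w powr (s - 1)"
  using assms by (metis diff_add_cancel mult.commute powr_add powr_to_1)

lemma has_field_derivative_lower_gamma_primitive: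
  fixes s w :: complex
  assumes w: "w \<notin> \<real>\<^sub>\<le>\<^sub>0" and s: "s \<notin> \<int>\<^sub>\<le>\<^sub>0"
  shows "((\<lambda>w. w powr s * exp (- w) * lower_gamma_series s w)
           has_field_derivative w powr (s - 1) * exp (- w)) (at w)"
proof -
  define P where "P = lower_gamma_series s w"
  define P' where "P' = (\<Sum>k. diffs (lower_gamma_coeff s) k * w ^ k)"
  have "w \<noteq> 0"
    using w by auto
  have "((\<lambda>w. w powr s * exp (- w) * lower_gamma_series s w) has_field_derivative
          w powr s * exp (- w) * P' + (w powr s * - exp (- w) + s * w powr (s - 1) * exp (- w)) * P) (at w)"
    (is "(_ has_field_derivative ?D) _")
    unfolding P_def P'_def
    by (intro DERIV_mult' has_field_derivative_powr[OF w] has_field_derivative_lower_gamma_series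
          derivative_eq_intros) auto
  moreover have "?D = w powr (s - 1) * exp (- w) * (s * P + w * P' - w * P)"
    using powr_eq_mult_powr_diff_one[OF \<open>w \<noteq> 0\<close>, of s] by (simp add: algebra_simps)
  moreover have "s * P + w * P' = 1 + w * P"
    unfolding P_def P'_def by (rule lower_gamma_series_ode[OF s])
  ultimately show ?thesis
    by simp
qed

lemma lower_gamma_aux_0_eq_series:
  assumes x: "x \<notin> \<real>\<^sub>\<le>\<^sub>0" and s: "Re s > 0"
  shows "lower_gamma_aux 0 s x = x powr s * exp (- x) * lower_gamma_series s x"
proof -
  define G where "G w = w powr s * exp (- w) * lower_gamma_series s w" for w
  have s_nonpos_Int: "s \<notin> \<int>\<^sub>\<le>\<^sub>0"
    using s nonpos_Ints_subset_nonpos_Reals by (auto simp: complex_nonpos_Reals_iff)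
  have ux: "of_real u * x \<notin> \<real>\<^sub>\<le>\<^sub>0" if "u > 0" for u :: real
    using x that by (auto simp: complex_nonpos_Reals_iff mult_le_0_iff)
  have "(G \<circ> (\<lambda>u. of_real u * x) has_vector_derivative
          (of_real u * x) powr (s - 1) * exp (- (of_real u * x)) * x) (at u)"
    if "u \<in> {0<..<1}" for u :: real
  proof -
    have "u > 0" using that by simp
    have "((\<lambda>y. y * x) has_field_derivative x) (at (of_real u))"
      by (auto intro!: derivative_eq_intros)
    from DERIV_chain2[OF has_field_derivative_lower_gamma_primitive[OF ux[OF \<open>u > 0\<close>] s_nonpos_Int] this]
    have "((\<lambda>y. G (y * x)) has_field_derivative
            (of_real u * x) powr (s - 1) * exp (- (of_real u * x)) * x) (at (of_real u))"
      unfolding G_def .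
    from has_vector_derivative_real_field[OF this] show ?thesis
      by (simp add: o_def)
  qed
  moreover have "continuous_on {0..1} (G \<circ> (\<lambda>u. of_real u * x))"
    unfolding G_def o_def using x s
    by (intro continuous_intros continuous_on_powr_complex)
       (auto simp: complex_nonpos_Reals_iff)
  ultimately have "((\<lambda>u. (of_real u * x) powr (s - 1) * exp (- (of_real u * x)) * x)
                      has_integral G x - G 0) {0..1}"
    using fundamental_theorem_of_calculus_interior[of 0 1 "G \<circ> (\<lambda>u. of_real u * x)"] by simp
  then have "((\<lambda>t. t powr (s - 1) * exp (- t)) has_contour_integral G x) (linepath 0 x)"
    unfolding has_contour_integral_linepath by (simp add: linepath_def scaleR_conv_of_real G_def)
  then show ?thesis
    by (simp add: contour_integral_unique G_def)
qed

lemma lower_gamma_aux_eq_series: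
  assumes x: "x \<notin> \<real>\<^sub>\<le>\<^sub>0"
    and "s \<notin> \<int>\<^sub>\<le>\<^sub>0" and "Re s + of_nat n > 0"
  shows "lower_gamma_aux n s x = x powr s * exp (- x) * lower_gamma_series s x"
  using assms(2,3)
proof (induction n arbitrary: s)
  case 0
  then show ?case using lower_gamma_aux_0_eq_series[OF x] by simp
next
  case (Suc n)
  have "s \<noteq> 0" "s + 1 \<notin> \<int>\<^sub>\<le>\<^sub>0"
    using Suc.prems(1) plus_one_in_nonpos_Ints_imp by auto
  have "lower_gamma_aux (Suc n) s x
          = (x powr (s + 1) * exp (- x) * lower_gamma_series (s + 1) x + x powr s * exp (- x)) / s"
    using Suc.IH[of "s + 1"] \<open>s + 1 \<notin> \<int>\<^sub>\<le>\<^sub>0\<close> Suc.prems(2) by simp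
  also have "\<dots> = x powr s * exp (- x) * ((1 + x * lower_gamma_series (s + 1) x) / s)"
    by (simp add: powr_add add_divide_distrib algebra_simps)
  also have "(1 + x * lower_gamma_series (s + 1) x) / s = lower_gamma_series s x"
    using lower_gamma_series_rec[OF \<open>s \<noteq> 0\<close>] \<open>s \<noteq> 0\<close> by (simp add: field_simps)
  finally show ?case .
qed

lemma lower_gamma_eq_series:
  assumes "x \<notin> \<real>\<^sub>\<le>\<^sub>0" and "s \<notin> \<int>\<^sub>\<le>\<^sub>0"
  shows "lower_gamma s x = x powr s * exp (- x) * lower_gamma_series s x"
proof (cases "Re s > 0")
  case True
  then show ?thesis
    using lower_gamma_aux_eq_series[OF assms, of 0] by (simp add: lower_gamma_def)
next
  case False
  have "Re s + of_nat (nat (\<lfloor>- Re s\<rfloor> + 1)) > 0"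
    using False by linarith
  then show ?thesis
    using lower_gamma_aux_eq_series[OF assms] False by (simp add: lower_gamma_def)
qed

lemma two_mult_pochhammer_3: "2 * pochhammer (3::'a::{comm_semiring_1,semiring_char_0}) k = fact (k + 2)"
  using pochhammer_product'[of "1::'a" 2 k] by (simp add: fact_numeral flip: pochhammer_fact)

lemma hypergeom_2F2_term:
  fixes z :: "'a::field_char_0"
  shows "(\<Prod>a\<leftarrow>[1, 1]. pochhammer a k) / (\<Prod>b\<leftarrow>[3, z + 2]. pochhammer b k) * z ^ k / fact k
           = 2 * (z ^ k / pochhammer (z + 2) k) / (of_nat (Suc k) * of_nat (Suc (Suc k)))"
proof -
  have "fact (k + 2) = fact k * (of_nat (Suc k) * of_nat (Suc (Suc k)) :: 'a)"
    by (simp add: algebra_simps)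
  then have p3: "pochhammer 3 k = fact k * (of_nat (Suc k) * of_nat (Suc (Suc k))) / (2 :: 'a)"
    using two_mult_pochhammer_3[of k, where 'a = 'a] by (simp add: eq_divide_eq mult.commute)
  show ?thesis
    by (cases "pochhammer (z + 2) k = 0") (simp_all add: p3 field_simps flip: pochhammer_fact of_nat_Suc)
qed

lemma hypergeom_2F2_term_telescoping:
  fixes z E :: "'a::field_char_0" and k :: nat
  defines "a \<equiv> z + 2 + of_nat k"
  assumes "a \<noteq> 0"
  shows "2 * E / (of_nat (Suc k) * of_nat (Suc (Suc k)))
           = 2 * E / of_nat (Suc k) - 2 * (E * (z / a)) / of_nat (Suc (Suc k)) - 2 * (E / a)"
proof -
  have absorb: "E * (z / a) / q + E / a = E / q" if "q \<noteq> 0" "z + q = a" for q :: 'a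
  proof -
    have "E * (z / a) / q + E / a = E * (z + q) / (a * q)"
      using \<open>a \<noteq> 0\<close> that(1) by (simp add: field_simps)
    then show ?thesis
      using \<open>a \<noteq> 0\<close> that(2) by simp
  qed
  have partial_fractions: "E / p - E / q = E / (p * q)" if "p \<noteq> 0" "q \<noteq> 0" "q = p + 1" for p q :: 'a
    using that by (simp add: field_simps)
  have "E * (z / a) / of_nat (Suc (Suc k)) + E / a = E / of_nat (Suc (Suc k))"
    by (intro absorb of_nat_neq_0) (simp add: a_def add_ac)
  moreover have "E / of_nat (Suc k) - E / of_nat (Suc (Suc k)) = E / (of_nat (Suc k) * of_nat (Suc (Suc k)))"
    by (intro partial_fractions of_nat_neq_0) simp
  moreover have "2 * E / of_nat (Suc k) - 2 * (E * (z / a)) / of_nat (Suc (Suc k)) - 2 * (E / a)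
                   = 2 * (E / of_nat (Suc k) - (E * (z / a) / of_nat (Suc (Suc k)) + E / a))"
    by (simp add: algebra_simps del: of_nat_Suc)
  ultimately show ?thesis
    by simp
qed

lemma hypergeom_2F2_eq_series:
  fixes z :: "'a::{real_normed_field,banach}"
  assumes z: "z + 2 \<notin> \<int>\<^sub>\<le>\<^sub>0"
  shows "hypergeom [1, 1] [3, z + 2] z = 2 - 2 * lower_gamma_series (z + 2) z"
proof -
  define e where "e k = z ^ k / pochhammer (z + 2) k" for k
  define D where "D k = 2 * e k / of_nat (Suc k)" for k
  have shift_nz: "z + 2 + of_nat k \<noteq> 0" for k
    using z plus_of_nat_eq_0_imp by blast
  have e_Suc: "e (Suc k) = e k * (z / (z + 2 + of_nat k))" for k
    by (simp add: e_def pochhammer_Suc)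
  have "summable e"
    using e_Suc by (rule summable_of_ratio_over_linear)
  then have "(\<lambda>k. 2 * e k * (1 / of_nat (Suc k))) \<longlonglongrightarrow> 2 * 0 * 0"
    by (intro tendsto_mult tendsto_const summable_LIMSEQ_zero LIMSEQ_Suc[OF lim_1_over_n])
  then have "D \<longlonglongrightarrow> 0"
    unfolding D_def [abs_def] by simp
  then have telescope: "(\<lambda>k. D k - D (Suc k)) sums 2"
    using telescope_sums' by (fastforce simp: D_def e_def)
  have coeff_eq: "lower_gamma_coeff (z + 2) k * z ^ k = e k / (z + 2 + of_nat k)" for k
    by (simp add: lower_gamma_coeff_def e_def pochhammer_Suc)
  have term_telescopes: "2 * e k / (of_nat (Suc k) * of_nat (Suc (Suc k)))
          = D k - D (Suc k) - 2 * (e k / (z + 2 + of_nat k))" for k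
    unfolding D_def e_Suc by (rule hypergeom_2F2_term_telescoping[OF shift_nz])
  have "(\<lambda>k. D k - D (Suc k) - 2 * (lower_gamma_coeff (z + 2) k * z ^ k))
          sums (2 - 2 * lower_gamma_series (z + 2) z)"
    by (intro sums_diff telescope sums_mult lower_gamma_series_sums)
  then have "(\<lambda>k. (\<Prod>a\<leftarrow>[1, 1]. pochhammer a k) / (\<Prod>b\<leftarrow>[3, z + 2]. pochhammer b k) * z ^ k / fact k)
               sums (2 - 2 * lower_gamma_series (z + 2) z)"
    unfolding hypergeom_2F2_term e_def[symmetric] coeff_eq term_telescopes .
  then show ?thesis
    unfolding hypergeom_def by (rule sums_unique[symmetric])
qed

lemma lower_gamma_series_of_nat:
  fixes x :: "'a::{real_normed_field,banach}"
  assumes "m > 0"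
  shows "x ^ m * lower_gamma_series (of_nat m) x = fact (m - 1) * (exp x - (\<Sum>k<m. x ^ k / fact k))"
proof -
  have "(\<lambda>k. x ^ k / fact k) sums exp x"
    using exp_converges[of x] by (simp add: scaleR_conv_of_real divide_inverse mult.commute)
  from sums_mult[OF sums_split_initial_segment[OF this, of m], of "fact (m - 1)"]
  have "(\<lambda>i. fact (m - 1) * (x ^ (i + m) / fact (i + m)))
          sums (fact (m - 1) * (exp x - (\<Sum>k<m. x ^ k / fact k)))" .
  moreover have "fact (m - 1) * (x ^ (i + m) / fact (i + m)) = x ^ m * (lower_gamma_coeff (of_nat m) i * x ^ i)" for i
  proof -
    have "fact (i + m) = fact (m - 1) * (pochhammer (of_nat m) (Suc i) :: 'a)"
      using pochhammer_product'[of "1::'a" "m - 1" "Suc i"] assms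
      by (simp add: pochhammer_fact[symmetric] of_nat_diff add_ac)
    then show ?thesis
      by (simp add: lower_gamma_coeff_def power_add field_simps)
  qed
  ultimately show ?thesis
    using sums_mult[OF lower_gamma_series_sums, of "x ^ m" "of_nat m" x] sums_unique2 by simp
qed

lemma hypergeom_2F2_closed_form:
  fixes z :: "'a::{real_normed_field,banach}"
  assumes z: "z \<notin> \<int>\<^sub>\<le>\<^sub>0"
  shows "hypergeom [1, 1] [3, z + 2] z = 2 * (z + 1) / z\<^sup>2 * (1 + z - z * lower_gamma_series z z)"
proof -
  have "z \<noteq> 0" "z + 1 \<noteq> 0"
    using z plus_of_nat_eq_0_imp[of z 1] by auto
  have "z + 2 \<notin> \<int>\<^sub>\<le>\<^sub>0"
    using z nonpos_Ints_diff_Nats[of "z + 2" 2] by auto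
  define P1 where "P1 = lower_gamma_series (z + 1) z"
  define P2 where "P2 = lower_gamma_series (z + 2) z"
  have rec1: "z * lower_gamma_series z z = 1 + z * P1"
    unfolding P1_def by (rule lower_gamma_series_rec[OF \<open>z \<noteq> 0\<close>])
  have rec2: "(z + 1) * P1 = 1 + z * P2"
    unfolding P1_def P2_def using lower_gamma_series_rec[OF \<open>z + 1 \<noteq> 0\<close>, of z]
    by (simp add: add.assoc)
  have "2 * (z + 1) / z\<^sup>2 * (1 + z - z * lower_gamma_series z z) = 2 * ((z + 1) - (z + 1) * P1) / z"
    using \<open>z \<noteq> 0\<close> unfolding rec1 by (simp add: power2_eq_square field_simps)
  also have "\<dots> = 2 - 2 * P2"
    using \<open>z \<noteq> 0\<close> unfolding rec2 by (simp add: field_simps)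
  finally show ?thesis
    unfolding hypergeom_2F2_eq_series[OF \<open>z + 2 \<notin> \<int>\<^sub>\<le>\<^sub>0\<close>] P2_def ..
qed

theorem lemma2p3:
  shows "(\<forall>z::complex. \<bar>Arg z\<bar> < pi \<and> z \<noteq> 0 \<longrightarrow>
            hypergeom [1, 1] [3, z + 2] z =
              2 * (z + 1) / z\<^sup>2 * (1 + z - lower_gamma z z / (z powr (z - 1) * exp (- z))))
       \<and> (\<forall>n::nat. n > 0 \<longrightarrow>
            hypergeom [1, 1] [3, real n + 2] (real n) =
              2 * (real n + 1) / (real n)\<^sup>2 *
                (1 + real n - fact (n - 1) / (real n) ^ (n - 1) *
                   (exp (real n) - (\<Sum>k<n. (real n) ^ k / fact k))))"
proof (intro conjI allI impI)
  fix z :: complex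
  assume z: "\<bar>Arg z\<bar> < pi \<and> z \<noteq> 0"
  then have "z \<notin> \<real>\<^sub>\<le>\<^sub>0"
    using Arg_eq_pi[of z] by (auto simp: complex_nonpos_Reals_iff complex_eq_iff)
  then have "z \<notin> \<int>\<^sub>\<le>\<^sub>0"
    using nonpos_Ints_subset_nonpos_Reals by blast
  then have "lower_gamma z z / (z powr (z - 1) * exp (- z)) = z * lower_gamma_series z z"
    using z \<open>z \<notin> \<real>\<^sub>\<le>\<^sub>0\<close>
    by (simp add: lower_gamma_eq_series powr_eq_mult_powr_diff_one[of z z])
  then show "hypergeom [1, 1] [3, z + 2] z =
               2 * (z + 1) / z\<^sup>2 * (1 + z - lower_gamma z z / (z powr (z - 1) * exp (- z)))"
    by (simp add: hypergeom_2F2_closed_form[OF \<open>z \<notin> \<int>\<^sub>\<le>\<^sub>0\<close>])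
next
  fix n :: nat
  assume "n > 0"
  then have "real n ^ n = real n * real n ^ (n - 1)"
    by (metis Suc_diff_1 power_Suc)
  then have "fact (n - 1) / real n ^ (n - 1) * (exp (real n) - (\<Sum>k<n. real n ^ k / fact k))
               = real n * lower_gamma_series (real n) (real n)"
    using lower_gamma_series_of_nat[OF \<open>n > 0\<close>, of "real n"] \<open>n > 0\<close> by (simp add: field_simps)
  moreover have "real n \<notin> \<int>\<^sub>\<le>\<^sub>0"
    using \<open>n > 0\<close> by (simp add: of_nat_in_nonpos_Ints_iff)
  ultimately show "hypergeom [1, 1] [3, real n + 2] (real n) =
                     2 * (real n + 1) / (real n)\<^sup>2 *
                       (1 + real n - fact (n - 1) / (real n) ^ (n - 1) *
                          (exp (real n) - (\<Sum>k<n. (real n) ^ k / fact k)))"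
    by (simp add: hypergeom_2F2_closed_form)
qed

end
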